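(* There exists an elliptic curve $E$ defined over $\mathbf{Q}$ with $S_y(E) \geq 7$; that is, there exist an elliptic curve $E/\mathbf{Q}$ and seven distinct rational points $P_1,\dots,P_7 \in E(\mathbf{Q})$ whose $y$-coordinates, after a suitable reordering, form an arithmetic progression with nonzero common difference.
   Context: An elliptic curve over $\mathbf{Q}$ is given by a general Weierstrass equation $Y^2 + a_1XY + a_3Y = X^3 + a_2X^2 + a_4X + a_6$ with $a_i \in \mathbf{Q}$ and nonzero discriminant. Rational points $P_0,\dots,P_n \in E$ are said to form a $y$-arithmetic progression if their $y$-coordinates (not necessarily in the order of the indices) form an arithmetic progression with nonzero common difference; $S_y(E)$ denotes the maximal number of rational points of $E$ forming a $y$-arithmetic progression. *)

theory Defs
  imports Main "HOL.Rat"
begin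

definition ec_disc :: "rat \<Rightarrow> rat \<Rightarrow> rat \<Rightarrow> rat \<Rightarrow> rat \<Rightarrow> rat" where
  "ec_disc a1 a2 a3 a4 a6 =
     (let b2 = a1^2 + 4*a2;
          b4 = 2*a4 + a1*a3;
          b6 = a3^2 + 4*a6;
          b8 = a1^2*a6 + 4*a2*a6 - a1*a3*a4 + a2*a3^2 - a4^2
      in 0 - b2^2*b8 - 8*b4^3 - 27*b6^2 + 9*b2*b4*b6)"

definition on_curve :: "rat \<Rightarrow> rat \<Rightarrow> rat \<Rightarrow> rat \<Rightarrow> rat \<Rightarrow> rat \<Rightarrow> rat \<Rightarrow> bool" where
  "on_curve a1 a2 a3 a4 a6 x y \<longleftrightarrow>
     y^2 + a1*x*y + a3*y = x^3 + a2*x^2 + a4*x + a6"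

end

theory Submission
  imports Defs
begin

text \<open>Completing the square, the curve \<open>Y^2 - 6Y = X^3 + 17X^2 + 91X + 147\<close> becomes
  \<open>(Y - 3)^2 = f(X)\<close> with \<open>f(X) = X^3 + 17X^2 + 91X + 156\<close>, the cubic interpolating the
  values \<open>f(-4) = 0\<close>, \<open>f(-5) = 1\<close>, \<open>f(-8) = 4\<close>, \<open>f(-7) = 9\<close>. Each \<open>X = x\<^sub>t\<close> with
  \<open>f(x\<^sub>t) = t^2\<close> thus gives the points with \<open>Y = 3 - t\<close> and \<open>Y = 3 + t\<close>, and
  \<open>t = 0, 1, 2, 3\<close> yields seven rational points with \<open>Y = 0, 1, \<dots>, 6\<close>.\<close>

lemma on_curve_completed_square:
  "on_curve 0 a2 (-6) a4 a6 x y \<longleftrightarrow> (y - 3)^2 = x^3 + a2 * x^2 + a4 * x + (a6 + 9)"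
  by (auto simp: on_curve_def power2_eq_square algebra_simps)

lemma inj_on_of_snd_arith_progression:
  fixes P :: "nat \<Rightarrow> 'a \<times> 'b::field_char_0"
  assumes "d \<noteq> 0" and "\<And>k. k \<in> A \<Longrightarrow> snd (P k) = c + of_nat k * d"
  shows "inj_on P A"
proof (rule inj_onI)
  fix k l assume "k \<in> A" "l \<in> A" "P k = P l"
  then have "c + of_nat k * d = c + of_nat l * d"
    using assms(2) by metis
  then show "k = l"
    using \<open>d \<noteq> 0\<close> by simp
qed

definition ap_point :: "nat \<Rightarrow> rat \<times> rat" where
  "ap_point k = ([-7, -8, -5, -4, -5, -8, -7] ! k, of_nat k)"

lemma ec_disc_ap_curve_nonzero: "ec_disc 0 17 (-6) 91 147 \<noteq> 0"
  by (simp add: ec_disc_def Let_def)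

lemma ap_point_on_curve:
  assumes "k < 7"
  shows "on_curve 0 17 (-6) 91 147 (fst (ap_point k)) (snd (ap_point k))"
proof -
  have "k \<in> {0, 1, 2, 3, 4, 5, 6}"
    using assms by auto
  then show ?thesis
    unfolding on_curve_completed_square by (auto simp: ap_point_def power2_eq_square)
qed

theorem theorem1:
  shows "\<exists>a1 a2 a3 a4 a6 :: rat. ec_disc a1 a2 a3 a4 a6 \<noteq> 0 \<and>
    (\<exists>(P :: nat \<Rightarrow> rat \<times> rat) (c :: rat) (d :: rat) (\<sigma> :: nat \<Rightarrow> nat).
        inj_on P {..<7} \<and>
        (\<forall>i<7. on_curve a1 a2 a3 a4 a6 (fst (P i)) (snd (P i))) \<and>
        d \<noteq> 0 \<and>
        bij_betw \<sigma> {..<7} {..<7} \<and>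
        (\<forall>k<7. snd (P (\<sigma> k)) = c + of_nat k * d))"
proof (intro exI conjI)
  have progression: "snd (ap_point k) = 0 + of_nat k * 1" for k
    by (simp add: ap_point_def)
  show "ec_disc 0 17 (-6) 91 147 \<noteq> 0"
    by (rule ec_disc_ap_curve_nonzero)
  show "inj_on ap_point {..<7}"
    by (rule inj_on_of_snd_arith_progression[OF _ progression]) simp
  show "\<forall>k<7. on_curve 0 17 (-6) 91 147 (fst (ap_point k)) (snd (ap_point k))"
    using ap_point_on_curve by blast
  show "(1::rat) \<noteq> 0" by simp
  show "bij_betw id {..<7::nat} {..<7}" by simp
  show "\<forall>k<7. snd (ap_point (id k)) = 0 + of_nat k * 1"
    using progression by simp
qed

end
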